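(* In the base model, define the expected population utility loss $PL(\mu_A,\sigma_A)=\mathbb E_{\theta\sim N(\mu_T,\sigma_T^2)}[L^\star(\theta)]$, where $L^\star$ is computed with AI prior $N(\mu_A,\sigma_A^2)$. Then: (1) for every $\sigma_A>0$, $PL(\cdot,\sigma_A)$ is minimized at $\mu_A=\mu_T$, and $\frac{\partial PL}{\partial\mu_A}(\mu_T,\sigma_T)=0$; (2) if $\Gamma=\infty$ and $\gamma\ge2\sigma_T^2$, then $\frac{\partial PL}{\partial\sigma_A}(\mu_T,\sigma_T)<0$.
   Context: Base model. Fix $\mu_T\in\mathbb R$, $\sigma_T>0$, $\mu_A\in\mathbb R$, $\sigma_A>0$, $\gamma>0$ (cost of human–AI interaction) and $\Gamma\in(0,\infty]$ (utility cost of doing the task without AI). User preferences $\theta$ are distributed in the population as $N(\mu_T,\sigma_T^2)$ with density $\pi_T$. A user of type $\theta$ chooses a noise level $\sigma\in[0,\infty]$; the AI observes $s=\theta+\varepsilon$, $\varepsilon\sim N(0,\sigma^2)$, and outputs the posterior mean under the prior $N(\mu_A,\sigma_A^2)$: $\theta_A(s,\sigma)=\frac{\sigma_A^2}{\sigma_A^2+\sigma^2}s+\frac{\sigma^2}{\sigma_A^2+\sigma^2}\mu_A$ (with $\theta_A=\mu_A$ when $\sigma=\infty$). Fidelity error: $E(\theta,\sigma)=\mathbb E_{s\sim N(\theta,\sigma^2)}[(\theta_A(s,\sigma)-\theta)^2]$. Communication cost: $I(\sigma)=-\tfrac12\ln\frac{\sigma^2}{\sigma_T^2+\sigma^2}$,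 with $I(0)=+\infty$, $I(\infty)=0$. Loss: $L(\theta,\sigma)=E(\theta,\sigma)+\gamma I(\sigma)$, $\sigma^\star(\theta)\in\arg\min_{\sigma\in[0,\infty]}L(\theta,\sigma)$, and $L^\star(\theta)=\min(L(\theta,\sigma^\star(\theta)),\Gamma)$; $\Gamma=\infty$ means $L^\star(\theta)=\min_\sigma L(\theta,\sigma)$. *)

theory Defs
  imports "HOL-Probability.Probability"
begin

definition post_mean :: "real \<Rightarrow> real \<Rightarrow> real \<Rightarrow> real \<Rightarrow> real" where
  "post_mean muA sigA sig s =
     sigA\<^sup>2 / (sigA\<^sup>2 + sig\<^sup>2) * s + sig\<^sup>2 / (sigA\<^sup>2 + sig\<^sup>2) * muA"

text \<open>Fidelity error E(theta, sigma) = expectation over s ~ N(theta, sigma^2), written as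
  s = theta + sigma * z with z standard normal; for sigma = infinity the output is muA.\<close>
definition fid_err :: "real \<Rightarrow> real \<Rightarrow> real \<Rightarrow> ereal \<Rightarrow> real" where
  "fid_err muA sigA theta sig =
     (if sig = \<infinity> then (muA - theta)\<^sup>2
      else (LINT z|lborel. std_normal_density z *
              (post_mean muA sigA (real_of_ereal sig) (theta + real_of_ereal sig * z) - theta)\<^sup>2))"

definition comm_cost :: "real \<Rightarrow> ereal \<Rightarrow> ereal" where
  "comm_cost sigT sig =
     (if sig = 0 then \<infinity> else if sig = \<infinity> then 0
      else ereal (- (1/2) * ln ((real_of_ereal sig)\<^sup>2 / (sigT\<^sup>2 + (real_of_ereal sig)\<^sup>2))))"

definition loss :: "real \<Rightarrow> real \<Rightarrow> real \<Rightarrow> real \<Rightarrow> real \<Rightarrow> ereal \<Rightarrow> ereal" where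
  "loss sigT gam muA sigA theta sig =
     ereal (fid_err muA sigA theta sig) + ereal gam * comm_cost sigT sig"

definition opt_loss :: "real \<Rightarrow> real \<Rightarrow> ereal \<Rightarrow> real \<Rightarrow> real \<Rightarrow> real \<Rightarrow> ereal" where
  "opt_loss sigT gam Gam muA sigA theta =
     min (INF sig\<in>{0..\<infinity>}. loss sigT gam muA sigA theta sig) Gam"

definition pop_loss :: "real \<Rightarrow> real \<Rightarrow> real \<Rightarrow> ereal \<Rightarrow> real \<Rightarrow> real \<Rightarrow> real" where
  "pop_loss muT sigT gam Gam muA sigA =
     (LINT theta|lborel. normal_density muT sigT theta *
        real_of_ereal (opt_loss sigT gam Gam muA sigA theta))"

end

theory Submission
  imports Defs
begin

text \<open>
  Parametrise the noise level by the weight \<open>a = s / (s + \<sigma>\<^sup>2) \<in> [0, 1)\<close> that the AI puts on the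
  signal, where \<open>s = \<sigma>\<^sub>A\<^sup>2\<close>. The loss becomes \<open>(1 - a)\<^sup>2 D + c(s, a)\<close> with \<open>D = (\<mu>\<^sub>A - \<theta>)\<^sup>2\<close> and a
  cost \<open>c\<close> independent of \<open>\<mu>\<^sub>A\<close>, so \<open>L\<^sup>\<star>(\<theta>) = G((\<mu>\<^sub>A - \<theta>)\<^sup>2)\<close> for a monotone \<open>G\<close> that lies between
  \<open>0\<close> and the identity and satisfies \<open>G(D + e\<^sub>1) + G(D + e\<^sub>2) \<le> 2 G(D) + e\<^sub>1 + e\<^sub>2\<close> whenever
  \<open>e\<^sub>1 + e\<^sub>2 \<ge> 0\<close>. Reflecting the Gaussian about the midpoint of \<open>\<mu>\<^sub>T\<close> and \<open>\<mu>\<^sub>A\<close> shows that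
  \<open>\<mu>\<^sub>A = \<mu>\<^sub>T\<close> is optimal, and the second-difference bound then makes the derivative in \<open>\<mu>\<^sub>A\<close>
  vanish there.

  For \<open>s = T = \<sigma>\<^sub>T\<^sup>2\<close> and \<open>\<gamma> \<ge> 2T\<close> the loss grows quadratically in \<open>a\<close> away from its unique
  minimiser \<open>a\<^sup>\<star>(D)\<close>, which gives an envelope theorem with a quadratic error term: the derivative
  of \<open>min\<^sub>a\<close> in \<open>s\<close> is the partial derivative \<open>a\<^sup>\<star>(1 - a\<^sup>\<star>) - \<gamma> a\<^sup>\<star> / (2T)\<close> of the cost. This is
  never positive, and negative as soon as \<open>a\<^sup>\<star> > 0\<close>, which happens for all users far enough
  from \<open>\<mu>\<^sub>T\<close>.
\<close>

lemma has_real_derivative_of_quadratic_error: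
  fixes f :: "real \<Rightarrow> real"
  assumes "r > 0" and error: "\<And>h. \<bar>h\<bar> < r \<Longrightarrow> \<bar>f (x + h) - f x - d * h\<bar> \<le> C * h\<^sup>2"
  shows "(f has_real_derivative d) (at x)"
proof -
  have "eventually (\<lambda>h. \<bar>h\<bar> < r \<and> h \<noteq> 0) (at (0::real))"
    using \<open>r > 0\<close> by (auto simp: eventually_at dist_real_def intro!: exI[of _ r])
  then have "eventually (\<lambda>h. norm ((f (x + h) - f x) / h - d) \<le> C * \<bar>h\<bar>) (at 0)"
  proof (rule eventually_mono)
    fix h :: real
    assume h: "\<bar>h\<bar> < r \<and> h \<noteq> 0"
    have "norm ((f (x + h) - f x) / h - d) = \<bar>f (x + h) - f x - d * h\<bar> / \<bar>h\<bar>"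
      using h by (simp add: field_simps)
    also have "\<dots> \<le> C * h\<^sup>2 / \<bar>h\<bar>"
      using error h by (intro divide_right_mono) auto
    also have "\<dots> = C * \<bar>h\<bar>"
      using h by (simp add: field_simps power2_eq_square)
    finally show "norm ((f (x + h) - f x) / h - d) \<le> C * \<bar>h\<bar>" .
  qed
  moreover have "((\<lambda>h. C * \<bar>h\<bar>) \<longlongrightarrow> 0) (at 0)"
    by (auto intro!: tendsto_eq_intros)
  ultimately have "((\<lambda>h. (f (x + h) - f x) / h - d) \<longlongrightarrow> 0) (at 0)"
    by (rule Lim_null_comparison)
  then show ?thesis
    by (simp add: DERIV_def LIM_zero_iff)
qed

lemma le_of_derivative_sign_change:
  fixes G G' :: "real \<Rightarrow> real"
  assumes deriv: "\<And>y. min x\<^sub>0 x \<le> y \<Longrightarrow> y \<le> max x\<^sub>0 x \<Longrightarrow> (G has_real_derivative G' y) (at y)"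
    and sign: "\<And>y. min x\<^sub>0 x < y \<Longrightarrow> y < max x\<^sub>0 x \<Longrightarrow> 0 \<le> (y - x\<^sub>0) * G' y"
  shows "G x\<^sub>0 \<le> G x"
proof (cases x\<^sub>0 x rule: linorder_cases)
  case less
  then obtain z where z: "x\<^sub>0 < z" "z < x" "G x - G x\<^sub>0 = (x - x\<^sub>0) * G' z"
    using MVT2[OF less, of G G'] deriv by (force simp: min_def max_def)
  then have "0 \<le> G' z"
    using sign[of z] less by (simp add: zero_le_mult_iff)
  then have "0 \<le> (x - x\<^sub>0) * G' z"
    using less by simp
  then show ?thesis
    using z by linarith
next
  case greater
  then obtain z where z: "x < z" "z < x\<^sub>0" "G x\<^sub>0 - G x = (x\<^sub>0 - x) * G' z"
    using MVT2[OF greater, of G G'] deriv by (force simp: min_def max_def)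
  then have "G' z \<le> 0"
    using sign[of z] greater by (simp add: zero_le_mult_iff)
  then have "(x\<^sub>0 - x) * G' z \<le> 0"
    using greater by (simp add: mult_nonneg_nonpos)
  then show ?thesis
    using z by linarith
qed simp

lemma minus_ln_one_minus_ge:
  fixes w :: real
  assumes "0 \<le> w" "w < 1"
  shows "w + w\<^sup>2 / 2 \<le> - ln (1 - w)"
proof (cases "w = 0")
  case False
  then have "0 < w"
    using assms by simp
  define h where "h x = - ln (1 - x) - x - x\<^sup>2 / 2" for x :: real
  have deriv: "(h has_real_derivative (1 / (1 - x) - 1 - x)) (at x)" if "0 \<le> x" "x \<le> w" for x
    using that assms unfolding h_def by (auto intro!: derivative_eq_intros simp: field_simps)
  obtain z where z: "0 < z" "z < w" "h w - h 0 = (w - 0) * (1 / (1 - z) - 1 - z)"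
    using MVT2[OF \<open>0 < w\<close> deriv] by auto
  have "1 / (1 - z) - 1 - z = z\<^sup>2 / (1 - z)"
    using z assms by (simp add: field_simps power2_eq_square)
  also have "\<dots> \<ge> 0"
    using z assms by simp
  finally have "0 \<le> w * (1 / (1 - z) - 1 - z)"
    using \<open>0 < w\<close> by simp
  then have "h 0 \<le> h w"
    using z(3) by simp
  then show ?thesis
    unfolding h_def by simp
qed simp

lemma ln_tangent_remainder_bounds:
  fixes x T :: real
  assumes "T > 0" "T / 2 \<le> x"
  shows "- 2 * (x - T)\<^sup>2 / T\<^sup>2 \<le> ln x - ln T - (x - T) / T"
    and "ln x - ln T - (x - T) / T \<le> 0"
proof -
  have x: "x > 0"
    using assms by simp
  have "ln (x / T) \<le> x / T - 1"
    using assms x by (intro ln_le_minus_one) simp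
  then show "ln x - ln T - (x - T) / T \<le> 0"
    using assms x by (simp add: ln_div field_simps)
  have "ln (T / x) \<le> T / x - 1"
    using assms x by (intro ln_le_minus_one) simp
  then have "(x - T) / x \<le> ln x - ln T"
    using assms x by (simp add: ln_div field_simps)
  moreover have "(x - T) / x - (x - T) / T = - ((x - T)\<^sup>2 / (x * T))"
    using assms x by (simp add: field_simps power2_eq_square)
  moreover have "(x - T)\<^sup>2 / (x * T) \<le> (x - T)\<^sup>2 / (T\<^sup>2 / 2)"
    using assms x by (intro divide_left_mono) (simp_all add: power2_eq_square mult_right_mono)
  ultimately show "- 2 * (x - T)\<^sup>2 / T\<^sup>2 \<le> ln x - ln T - (x - T) / T"
    by simp
qed

lemma quadratic_cross_term_lower_bound:
  fixes g x e c L :: real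
  assumes "g > 0" "\<bar>c\<bar> \<le> L"
  shows "- (L\<^sup>2 / g) * e\<^sup>2 \<le> g / 4 * x\<^sup>2 + e * (x * c)"
proof -
  have "c\<^sup>2 \<le> L\<^sup>2"
    using assms(2) by (metis abs_ge_zero power2_abs power_mono)
  then have "0 \<le> (g * x + 2 * e * c)\<^sup>2 + 4 * e\<^sup>2 * (L\<^sup>2 - c\<^sup>2)"
    by simp
  also have "\<dots> = 4 * g * (g / 4 * x\<^sup>2 + e * (x * c) + (L\<^sup>2 / g) * e\<^sup>2)"
    using assms(1) by (simp add: field_simps power2_eq_square)
  finally show ?thesis
    using assms(1) by (simp add: zero_le_mult_iff)
qed

section \<open>Gaussian integrals\<close>

lemma std_normal_integral_affine_sq:
  "(LINT z|lborel. std_normal_density z * (c + b * z)\<^sup>2) = c\<^sup>2 + b\<^sup>2"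
proof -
  have moment0: "has_bochner_integral lborel (\<lambda>z. std_normal_density z * z ^ (2 * 0)) 1"
    and moment1: "has_bochner_integral lborel (\<lambda>z. std_normal_density z * z ^ (2 * 0 + 1)) 0"
    and moment2: "has_bochner_integral lborel (\<lambda>z. std_normal_density z * z ^ (2 * 1)) 1"
    using std_normal_moment_even[of 0] std_normal_moment_odd[of 0] std_normal_moment_even[of 1] by simp_all
  have "has_bochner_integral lborel
      (\<lambda>z. c\<^sup>2 * (std_normal_density z * z ^ (2 * 0)) + (2 * c * b) * (std_normal_density z * z ^ (2 * 0 + 1))
           + b\<^sup>2 * (std_normal_density z * z ^ (2 * 1))) (c\<^sup>2 * 1 + (2 * c * b) * 0 + b\<^sup>2 * 1)"
    by (intro has_bochner_integral_add has_bochner_integral_mult_right moment0 moment1 moment2)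
  then have "has_bochner_integral lborel (\<lambda>z. std_normal_density z * (c + b * z)\<^sup>2) (c\<^sup>2 + b\<^sup>2)"
    by (rule has_bochner_integral_cong[THEN iffD1, rotated 3]) (auto simp: power2_eq_square algebra_simps)
  then show ?thesis
    by (rule has_bochner_integral_integral_eq)
qed

lemma integrable_normal_density_times_sq:
  assumes "sig > 0"
  shows "integrable lborel (\<lambda>x. normal_density mu sig x * (c - x)\<^sup>2)"
proof -
  have "integrable lborel (\<lambda>x. normal_density mu sig x * (x - mu) ^ 2
      + (- 2 * (c - mu)) * (normal_density mu sig x * (x - mu) ^ 1)
      + (c - mu)\<^sup>2 * (normal_density mu sig x * (x - mu) ^ 0))"
    using assms by (intro Bochner_Integration.integrable_add Bochner_Integration.integrable_mult_right
        integrable_normal_moment)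
  moreover have "(\<lambda>x. normal_density mu sig x * (x - mu) ^ 2
      + (- 2 * (c - mu)) * (normal_density mu sig x * (x - mu) ^ 1)
      + (c - mu)\<^sup>2 * (normal_density mu sig x * (x - mu) ^ 0))
    = (\<lambda>x. normal_density mu sig x * (c - x)\<^sup>2)"
    by (auto simp: fun_eq_iff power2_eq_square algebra_simps)
  ultimately show ?thesis
    by simp
qed

lemma integrable_normal_density_comp_sq:
  fixes G :: "real \<Rightarrow> real"
  assumes "sig > 0" and "mono G" and G_bounds: "\<And>D. 0 \<le> D \<Longrightarrow> 0 \<le> G D \<and> G D \<le> D"
  shows "integrable lborel (\<lambda>x. normal_density mu sig x * G ((c - x)\<^sup>2))"
proof (rule Bochner_Integration.integrable_bound[OF integrable_normal_density_times_sq[OF assms(1)]])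
  have [measurable]: "G \<in> borel_measurable borel"
    using \<open>mono G\<close> by (rule borel_measurable_mono)
  show "(\<lambda>x. normal_density mu sig x * G ((c - x)\<^sup>2)) \<in> borel_measurable lborel"
    by measurable
  show "AE x in lborel. norm (normal_density mu sig x * G ((c - x)\<^sup>2))
      \<le> norm (normal_density mu sig x * (c - x)\<^sup>2)"
  proof (rule AE_I2)
    fix x
    have "0 \<le> G ((c - x)\<^sup>2)" "G ((c - x)\<^sup>2) \<le> (c - x)\<^sup>2"
      using G_bounds[of "(c - x)\<^sup>2"] by simp_all
    then show "norm (normal_density mu sig x * G ((c - x)\<^sup>2)) \<le> norm (normal_density mu sig x * (c - x)\<^sup>2)"
      by (simp add: abs_mult mult_left_mono)
  qed
qed

lemma lborel_integral_reflect:
  fixes f :: "real \<Rightarrow> real"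
  shows "(LINT x|lborel. f x) = (LINT x|lborel. f (t - x))"
  using lborel_integral_real_affine[of "-1" f t] by simp

lemma normal_density_reflect: "normal_density mu sig (mu + m - x) = normal_density m sig x"
  unfolding normal_density_def by (simp add: power2_commute)

lemma normal_density_le_of_closer:
  assumes "(x - mu)\<^sup>2 \<le> (x - m)\<^sup>2"
  shows "normal_density m sig x \<le> normal_density mu sig x"
proof -
  have "- (x - m)\<^sup>2 / (2 * sig\<^sup>2) \<le> - (x - mu)\<^sup>2 / (2 * sig\<^sup>2)"
    using assms by (intro divide_right_mono) auto
  then show ?thesis
    unfolding normal_density_def by (intro mult_left_mono) auto
qed

lemma normal_density_diff_mult_mono_diff_nonneg:
  fixes G :: "real \<Rightarrow> real"
  assumes "mono G"
  shows "0 \<le> (normal_density mu sig x - normal_density m sig x) * (G ((m - x)\<^sup>2) - G ((mu - x)\<^sup>2))"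
proof (cases "(x - mu)\<^sup>2 \<le> (x - m)\<^sup>2")
  case True
  then show ?thesis
    using normal_density_le_of_closer[OF True] assms by (auto simp: mono_def power2_commute)
next
  case False
  then have "(x - m)\<^sup>2 \<le> (x - mu)\<^sup>2"
    by simp
  then show ?thesis
    using normal_density_le_of_closer[of x m mu sig] assms
    by (auto simp: mono_def power2_commute intro!: mult_nonpos_nonpos)
qed

section \<open>Centring a Gaussian at its mean\<close>

lemma normal_mean_minimizes_integral:
  fixes G :: "real \<Rightarrow> real"
  assumes "sig > 0" and G_mono: "mono G" and "\<And>D. 0 \<le> D \<Longrightarrow> 0 \<le> G D \<and> G D \<le> D"
  shows "(LINT x|lborel. normal_density mu sig x * G ((mu - x)\<^sup>2))
       \<le> (LINT x|lborel. normal_density mu sig x * G ((m - x)\<^sup>2))"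
proof -
  note int = integrable_normal_density_comp_sq[OF assms]
  define I where "I c = (LINT x|lborel. normal_density mu sig x * G ((c - x)\<^sup>2))" for c
  txt \<open>Reflection \<open>x \<mapsto> mu + m - x\<close> swaps the roles of \<open>mu\<close> and \<open>m\<close>.\<close>
  have I_reflect: "(LINT x|lborel. normal_density m sig x * G ((c - x)\<^sup>2)) = I (mu + m - c)" for c
    unfolding I_def by (subst lborel_integral_reflect[where t = "mu + m"])
      (simp add: normal_density_reflect power2_commute algebra_simps)
  have "0 \<le> (LINT x|lborel. (normal_density mu sig x - normal_density m sig x)
                              * (G ((m - x)\<^sup>2) - G ((mu - x)\<^sup>2)))"
    using normal_density_diff_mult_mono_diff_nonneg[OF G_mono] by (intro integral_nonneg_AE AE_I2)
  also have "\<dots> = (LINT x|lborel.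
        (normal_density mu sig x * G ((m - x)\<^sup>2) - normal_density mu sig x * G ((mu - x)\<^sup>2))
      + (normal_density m sig x * G ((mu - x)\<^sup>2) - normal_density m sig x * G ((m - x)\<^sup>2)))"
    by (rule Bochner_Integration.integral_cong) (auto simp: algebra_simps)
  also have "\<dots> = (I m - I mu) + ((LINT x|lborel. normal_density m sig x * G ((mu - x)\<^sup>2))
                                - (LINT x|lborel. normal_density m sig x * G ((m - x)\<^sup>2)))"
    unfolding I_def using int by simp
  also have "\<dots> = 2 * (I m - I mu)"
    unfolding I_reflect by simp
  finally show ?thesis
    unfolding I_def by simp
qed

lemma normal_mean_has_derivative_zero:
  fixes G :: "real \<Rightarrow> real"
  assumes "sig > 0" and "mono G" and "\<And>D. 0 \<le> D \<Longrightarrow> 0 \<le> G D \<and> G D \<le> D"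
    and second_difference: "\<And>D e\<^sub>1 e\<^sub>2. e\<^sub>1 + e\<^sub>2 \<ge> 0 \<Longrightarrow> G (D + e\<^sub>1) + G (D + e\<^sub>2) \<le> 2 * G D + (e\<^sub>1 + e\<^sub>2)"
  shows "((\<lambda>m. LINT x|lborel. normal_density mu sig x * G ((m - x)\<^sup>2)) has_real_derivative 0) (at mu)"
proof -
  note int = integrable_normal_density_comp_sq[OF assms(1-3)]
  define P where "P m = (LINT x|lborel. normal_density mu sig x * G ((m - x)\<^sup>2))" for m
  have second_difference_P: "P (mu + h) + P (mu - h) \<le> 2 * P mu + 2 * h\<^sup>2" for h
  proof -
    have "normal_density mu sig x * G ((mu + h - x)\<^sup>2) + normal_density mu sig x * G ((mu - h - x)\<^sup>2)
        \<le> 2 * (normal_density mu sig x * G ((mu - x)\<^sup>2)) + 2 * h\<^sup>2 * normal_density mu sig x" for x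
    proof -
      have "G ((mu - x)\<^sup>2 + (2 * h * (mu - x) + h\<^sup>2)) + G ((mu - x)\<^sup>2 + (- 2 * h * (mu - x) + h\<^sup>2))
          \<le> 2 * G ((mu - x)\<^sup>2) + 2 * h\<^sup>2"
        using second_difference[of "2 * h * (mu - x) + h\<^sup>2" "- 2 * h * (mu - x) + h\<^sup>2"] by simp
      moreover have "(mu + h - x)\<^sup>2 = (mu - x)\<^sup>2 + (2 * h * (mu - x) + h\<^sup>2)"
        "(mu - h - x)\<^sup>2 = (mu - x)\<^sup>2 + (- 2 * h * (mu - x) + h\<^sup>2)"
        by (simp_all add: power2_eq_square algebra_simps)
      ultimately have "normal_density mu sig x * (G ((mu + h - x)\<^sup>2) + G ((mu - h - x)\<^sup>2))
          \<le> normal_density mu sig x * (2 * G ((mu - x)\<^sup>2) + 2 * h\<^sup>2)"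
        by (intro mult_left_mono) simp_all
      then show ?thesis
        by (simp add: algebra_simps)
    qed
    then have "(LINT x|lborel. normal_density mu sig x * G ((mu + h - x)\<^sup>2)
                              + normal_density mu sig x * G ((mu - h - x)\<^sup>2))
        \<le> (LINT x|lborel. 2 * (normal_density mu sig x * G ((mu - x)\<^sup>2)) + 2 * h\<^sup>2 * normal_density mu sig x)"
      using int \<open>sig > 0\<close> by (intro integral_mono) auto
    then show ?thesis
      unfolding P_def using int \<open>sig > 0\<close> by simp
  qed
  have "(P has_real_derivative 0) (at mu)"
  proof (rule has_real_derivative_of_quadratic_error[where r = 1 and C = 2])
    fix h :: real
    show "\<bar>P (mu + h) - P mu - 0 * h\<bar> \<le> 2 * h\<^sup>2"
      using second_difference_P[of h] normal_mean_minimizes_integral[OF assms(1-3), of mu "mu + h"]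
        normal_mean_minimizes_integral[OF assms(1-3), of mu "mu - h"]
      unfolding P_def by linarith
  qed simp
  then show ?thesis
    unfolding P_def .
qed

section \<open>The loss as a function of the signal weight\<close>

lemma fid_err_finite:
  assumes "sigA \<noteq> 0"
  shows "fid_err muA sigA th (ereal r) =
    (r\<^sup>2 / (sigA\<^sup>2 + r\<^sup>2))\<^sup>2 * (muA - th)\<^sup>2 + (sigA\<^sup>2 / (sigA\<^sup>2 + r\<^sup>2))\<^sup>2 * r\<^sup>2"
proof -
  have pos: "sigA\<^sup>2 + r\<^sup>2 > 0"
    using assms by (simp add: add_pos_nonneg)
  have "post_mean muA sigA r (th + r * z) - th
      = (r\<^sup>2 / (sigA\<^sup>2 + r\<^sup>2)) * (muA - th) + (sigA\<^sup>2 / (sigA\<^sup>2 + r\<^sup>2) * r) * z" for z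
    using pos assms unfolding post_mean_def by (simp add: divide_simps) (simp add: algebra_simps power2_eq_square)
  then have "fid_err muA sigA th (ereal r)
      = (LINT z|lborel. std_normal_density z
           * ((r\<^sup>2 / (sigA\<^sup>2 + r\<^sup>2)) * (muA - th) + (sigA\<^sup>2 / (sigA\<^sup>2 + r\<^sup>2) * r) * z)\<^sup>2)"
    unfolding fid_err_def by simp
  also have "\<dots> = ((r\<^sup>2 / (sigA\<^sup>2 + r\<^sup>2)) * (muA - th))\<^sup>2 + (sigA\<^sup>2 / (sigA\<^sup>2 + r\<^sup>2) * r)\<^sup>2"
    by (rule std_normal_integral_affine_sq)
  finally show ?thesis
    by (simp add: power_mult_distrib power_divide)
qed

text \<open>
  With \<open>T = \<sigma>\<^sub>T\<^sup>2\<close>, \<open>s = \<sigma>\<^sub>A\<^sup>2\<close>, \<open>D = (\<mu>\<^sub>A - \<theta>)\<^sup>2\<close> and \<open>a = s / (s + \<sigma>\<^sup>2)\<close>, the fidelity error is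
  \<open>(1 - a)\<^sup>2 D + s a (1 - a)\<close> and the communication cost is \<open>ln (1 + T a / (s (1 - a))) / 2\<close>.
  The weight \<open>a = 0\<close> stands for \<open>\<sigma> = \<infinity>\<close>; \<open>\<sigma> = 0\<close> is never optimal.
\<close>

definition noise_cost :: "real \<Rightarrow> real \<Rightarrow> real \<Rightarrow> real \<Rightarrow> real" where
  "noise_cost T g s a = s * a * (1 - a) + g / 2 * ln (1 + T * a / (s * (1 - a)))"

definition weight_loss :: "real \<Rightarrow> real \<Rightarrow> real \<Rightarrow> real \<Rightarrow> real \<Rightarrow> real" where
  "weight_loss T g s D a = (1 - a)\<^sup>2 * D + noise_cost T g s a"

definition min_weight_loss :: "real \<Rightarrow> real \<Rightarrow> real \<Rightarrow> real \<Rightarrow> real" where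
  "min_weight_loss T g s D = Inf (weight_loss T g s D ` {0..<1})"

lemma noise_cost_nonneg:
  "T > 0 \<Longrightarrow> g > 0 \<Longrightarrow> s > 0 \<Longrightarrow> 0 \<le> a \<Longrightarrow> a < 1 \<Longrightarrow> 0 \<le> noise_cost T g s a"
  unfolding noise_cost_def by (intro add_nonneg_nonneg mult_nonneg_nonneg ln_ge_zero) auto

lemma weight_loss_zero [simp]: "weight_loss T g s D 0 = D"
  unfolding weight_loss_def noise_cost_def by simp

lemma weight_loss_ge_min_zero:
  assumes "T > 0" "g > 0" "s > 0" "0 \<le> a" "a < 1"
  shows "min D 0 \<le> weight_loss T g s D a"
proof -
  have "(1 - a)\<^sup>2 \<le> 1" "0 \<le> (1 - a)\<^sup>2"
    using assms by (auto simp: power2_eq_square mult_le_one)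
  then have "min D 0 \<le> (1 - a)\<^sup>2 * D"
    by (cases "D \<ge> 0") (auto simp: min_def intro: order_trans[OF _ mult_right_mono_neg[of "(1 - a)\<^sup>2" 1 D]])
  then show ?thesis
    using noise_cost_nonneg[OF assms] unfolding weight_loss_def by linarith
qed

lemma bdd_below_weight_loss: "T > 0 \<Longrightarrow> g > 0 \<Longrightarrow> s > 0 \<Longrightarrow> bdd_below (weight_loss T g s D ` {0..<1})"
  by (rule bdd_belowI[of _ "min D 0"]) (auto intro: weight_loss_ge_min_zero)

lemma min_weight_loss_le:
  "T > 0 \<Longrightarrow> g > 0 \<Longrightarrow> s > 0 \<Longrightarrow> 0 \<le> a \<Longrightarrow> a < 1 \<Longrightarrow> min_weight_loss T g s D \<le> weight_loss T g s D a"
  unfolding min_weight_loss_def by (rule cInf_lower) (auto intro: bdd_below_weight_loss)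

lemma min_weight_loss_greatest:
  "(\<And>a. 0 \<le> a \<Longrightarrow> a < 1 \<Longrightarrow> y \<le> weight_loss T g s D a) \<Longrightarrow> y \<le> min_weight_loss T g s D"
  unfolding min_weight_loss_def by (rule cInf_greatest) auto

lemma min_weight_loss_bounds:
  assumes "T > 0" "g > 0" "s > 0" "0 \<le> D"
  shows "0 \<le> min_weight_loss T g s D \<and> min_weight_loss T g s D \<le> D"
proof
  show "0 \<le> min_weight_loss T g s D"
    using weight_loss_ge_min_zero[OF assms(1-3), of _ D] assms(4) by (intro min_weight_loss_greatest) simp
  show "min_weight_loss T g s D \<le> D"
    using min_weight_loss_le[OF assms(1-3), of 0 D] by simp
qed

lemma mono_min_weight_loss:
  assumes "T > 0" "g > 0" "s > 0"
  shows "mono (min_weight_loss T g s)"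
proof (rule monoI, rule min_weight_loss_greatest)
  fix D D' a :: real
  assume "D \<le> D'" "0 \<le> a" "a < 1"
  then have "weight_loss T g s D a \<le> weight_loss T g s D' a"
    unfolding weight_loss_def by (simp add: mult_left_mono)
  then show "min_weight_loss T g s D \<le> weight_loss T g s D' a"
    using min_weight_loss_le[OF assms \<open>0 \<le> a\<close> \<open>a < 1\<close>, of D] by linarith
qed

text \<open>Each \<open>weight_loss T g s \<cdot> a\<close> is affine with slope \<open>(1 - a)\<^sup>2 \<le> 1\<close>, and this bound survives the infimum.\<close>

lemma min_weight_loss_second_difference:
  assumes "T > 0" "g > 0" "s > 0" "e\<^sub>1 + e\<^sub>2 \<ge> 0"
  shows "min_weight_loss T g s (D + e\<^sub>1) + min_weight_loss T g s (D + e\<^sub>2)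
       \<le> 2 * min_weight_loss T g s D + (e\<^sub>1 + e\<^sub>2)"
proof -
  have "(min_weight_loss T g s (D + e\<^sub>1) + min_weight_loss T g s (D + e\<^sub>2) - (e\<^sub>1 + e\<^sub>2)) / 2
      \<le> min_weight_loss T g s D"
  proof (rule min_weight_loss_greatest)
    fix a :: real
    assume a: "0 \<le> a" "a < 1"
    have "(1 - a)\<^sup>2 * (e\<^sub>1 + e\<^sub>2) \<le> 1 * (e\<^sub>1 + e\<^sub>2)"
      using a assms(4) by (intro mult_right_mono) (simp_all add: power2_eq_square mult_le_one)
    then have "weight_loss T g s (D + e\<^sub>1) a + weight_loss T g s (D + e\<^sub>2) a
        \<le> 2 * weight_loss T g s D a + (e\<^sub>1 + e\<^sub>2)"
      unfolding weight_loss_def by (simp add: algebra_simps)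
    then show "(min_weight_loss T g s (D + e\<^sub>1) + min_weight_loss T g s (D + e\<^sub>2) - (e\<^sub>1 + e\<^sub>2)) / 2
        \<le> weight_loss T g s D a"
      using min_weight_loss_le[OF assms(1-3) a, of "D + e\<^sub>1"] min_weight_loss_le[OF assms(1-3) a, of "D + e\<^sub>2"]
      by (simp add: field_simps)
  qed
  then show ?thesis
    by simp
qed

lemma loss_infinity: "loss sigT gam muA sigA th \<infinity> = ereal ((muA - th)\<^sup>2)"
  unfolding loss_def fid_err_def comm_cost_def by simp

lemma loss_zero: "gam > 0 \<Longrightarrow> loss sigT gam muA sigA th 0 = \<infinity>"
  unfolding loss_def comm_cost_def by simp

lemma loss_finite:
  assumes "sigA \<noteq> 0" "sigT > 0" "r > 0"
  shows "loss sigT gam muA sigA th (ereal r) =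
    ereal (weight_loss (sigT\<^sup>2) gam (sigA\<^sup>2) ((muA - th)\<^sup>2) (sigA\<^sup>2 / (sigA\<^sup>2 + r\<^sup>2)))"
proof -
  define s where "s = sigA\<^sup>2"
  define a where "a = s / (s + r\<^sup>2)"
  have s: "s > 0" and r2: "r\<^sup>2 > 0" and sr: "s + r\<^sup>2 > 0"
    using assms unfolding s_def by (simp_all add: add_pos_pos)
  have one_minus_a: "1 - a = r\<^sup>2 / (s + r\<^sup>2)"
    unfolding a_def using sr by (simp add: field_simps)
  have fid: "fid_err muA sigA th (ereal r) = (1 - a)\<^sup>2 * (muA - th)\<^sup>2 + s * a * (1 - a)"
    unfolding fid_err_finite[OF assms(1)] one_minus_a unfolding a_def s_def[symmetric]
    using s r2 by (simp add: field_simps power2_eq_square)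
  have "a > 0" and sa: "s * (1 - a) = a * r\<^sup>2"
    unfolding one_minus_a unfolding a_def using s sr by simp_all
  then have "sigT\<^sup>2 * a / (s * (1 - a)) = sigT\<^sup>2 / r\<^sup>2"
    unfolding sa by simp
  then have "1 + sigT\<^sup>2 * a / (s * (1 - a)) = (sigT\<^sup>2 + r\<^sup>2) / r\<^sup>2"
    using r2 by (simp add: field_simps)
  then have "ln (1 + sigT\<^sup>2 * a / (s * (1 - a))) = - ln (r\<^sup>2 / (sigT\<^sup>2 + r\<^sup>2))"
    using r2 assms by (simp add: ln_div)
  moreover have "comm_cost sigT (ereal r) = ereal (- (1 / 2) * ln (r\<^sup>2 / (sigT\<^sup>2 + r\<^sup>2)))"
    unfolding comm_cost_def using assms by simp
  ultimately show ?thesis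
    unfolding loss_def fid weight_loss_def noise_cost_def s_def[symmetric] a_def[symmetric] by simp
qed

lemma loss_attains_weight_loss:
  assumes "sigA \<noteq> 0" "sigT > 0" "0 \<le> a" "a < 1"
  shows "\<exists>sig\<in>{0..\<infinity>}. loss sigT gam muA sigA th sig = ereal (weight_loss (sigT\<^sup>2) gam (sigA\<^sup>2) ((muA - th)\<^sup>2) a)"
proof (cases "a = 0")
  case True
  then show ?thesis
    by (intro bexI[of _ \<infinity>]) (auto simp: loss_infinity)
next
  case False
  then have a: "0 < a" "a < 1"
    using assms by auto
  have "sigA\<^sup>2 > 0"
    using assms by simp
  define r where "r = sqrt (sigA\<^sup>2 * (1 - a) / a)"
  have r: "r > 0" and r2: "r\<^sup>2 = sigA\<^sup>2 * (1 - a) / a"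
    unfolding r_def using a \<open>sigA\<^sup>2 > 0\<close> by simp_all
  have "sigA\<^sup>2 / (sigA\<^sup>2 + r\<^sup>2) = a"
    unfolding r2 using a \<open>sigA\<^sup>2 > 0\<close> by (simp add: field_simps)
  then show ?thesis
    using r by (intro bexI[of _ "ereal r"]) (auto simp: loss_finite[OF assms(1,2) r])
qed

lemma loss_ge_weight_loss:
  assumes "sigA \<noteq> 0" "sigT > 0" "gam > 0" "sig \<in> {0..\<infinity>}"
  shows "\<exists>a\<in>{0..<1}. ereal (weight_loss (sigT\<^sup>2) gam (sigA\<^sup>2) ((muA - th)\<^sup>2) a) \<le> loss sigT gam muA sigA th sig"
proof (cases sig)
  case (real r)
  show ?thesis
  proof (cases "r = 0")
    case True
    then show ?thesis
      using real assms(3) by (intro bexI[of _ 0]) (auto simp: loss_zero zero_ereal_def[symmetric])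
  next
    case False
    then have r: "r > 0"
      using assms(4) real by auto
    have "sigA\<^sup>2 / (sigA\<^sup>2 + r\<^sup>2) < 1"
      using assms(1) r by (simp add: divide_less_eq add_pos_pos)
    then show ?thesis
      using real by (intro bexI[of _ "sigA\<^sup>2 / (sigA\<^sup>2 + r\<^sup>2)"]) (auto simp: loss_finite[OF assms(1,2) r])
  qed
next
  case PInf
  then show ?thesis
    by (intro bexI[of _ 0]) (auto simp: loss_infinity)
qed (use assms(4) in auto)

lemma INF_loss_eq_min_weight_loss:
  assumes "sigA \<noteq> 0" "sigT > 0" "gam > 0"
  shows "(INF sig\<in>{0..\<infinity>}. loss sigT gam muA sigA th sig)
       = ereal (min_weight_loss (sigT\<^sup>2) gam (sigA\<^sup>2) ((muA - th)\<^sup>2))"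
proof -
  have "sigT\<^sup>2 > 0" "sigA\<^sup>2 > 0"
    using assms by simp_all
  then have "ereal (min_weight_loss (sigT\<^sup>2) gam (sigA\<^sup>2) ((muA - th)\<^sup>2))
      = (INF a\<in>{0..<1}. ereal (weight_loss (sigT\<^sup>2) gam (sigA\<^sup>2) ((muA - th)\<^sup>2) a))"
    unfolding min_weight_loss_def using assms(3)
    by (subst ereal_Inf'[OF bdd_below_weight_loss]) (auto simp: image_comp)
  also have "\<dots> = (INF sig\<in>{0..\<infinity>}. loss sigT gam muA sigA th sig)"
    using loss_attains_weight_loss[OF assms(1,2)] loss_ge_weight_loss[OF assms]
    by (intro INF_eq) (metis atLeastLessThan_iff order_refl)+
  finally show ?thesis
    by simp
qed

text \<open>\<open>pop_loss\<close> integrates \<open>real_of_ereal\<close> of \<open>L\<^sup>\<star>\<close>; this loses nothing, as \<open>min_weight_loss\<close> is finite.\<close>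

definition capped_loss :: "real \<Rightarrow> real \<Rightarrow> ereal \<Rightarrow> real \<Rightarrow> real \<Rightarrow> real" where
  "capped_loss T g Gam s D = real_of_ereal (min (ereal (min_weight_loss T g s D)) Gam)"

lemma pop_loss_eq_capped_loss:
  assumes "sigA \<noteq> 0" "sigT > 0" "gam > 0"
  shows "pop_loss muT sigT gam Gam muA sigA
       = (LINT th|lborel. normal_density muT sigT th * capped_loss (sigT\<^sup>2) gam Gam (sigA\<^sup>2) ((muA - th)\<^sup>2))"
  unfolding pop_loss_def opt_loss_def INF_loss_eq_min_weight_loss[OF assms] capped_loss_def ..

lemma capped_loss_eq:
  assumes "Gam > 0"
  shows "capped_loss T g Gam s D
       = (if Gam = \<infinity> then min_weight_loss T g s D else min (min_weight_loss T g s D) (real_of_ereal Gam))"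
  using assms by (cases Gam) (auto simp: capped_loss_def min_def)

lemma capped_loss_infinity [simp]: "capped_loss T g \<infinity> s D = min_weight_loss T g s D"
  unfolding capped_loss_def by simp

lemma mono_capped_loss:
  assumes "T > 0" "g > 0" "s > 0" "Gam > 0"
  shows "mono (capped_loss T g Gam s)"
proof (rule monoI)
  fix D D' :: real
  assume "D \<le> D'"
  with mono_min_weight_loss[OF assms(1-3)] have "min_weight_loss T g s D \<le> min_weight_loss T g s D'"
    by (rule monoD)
  then show "capped_loss T g Gam s D \<le> capped_loss T g Gam s D'"
    unfolding capped_loss_eq[OF assms(4)] by (auto intro: min.mono)
qed

lemma capped_loss_bounds:
  assumes "T > 0" "g > 0" "s > 0" "Gam > 0" "0 \<le> D"
  shows "0 \<le> capped_loss T g Gam s D \<and> capped_loss T g Gam s D \<le> D"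
proof -
  have "Gam \<noteq> \<infinity> \<Longrightarrow> 0 < real_of_ereal Gam"
    using assms(4) by (cases Gam) auto
  then show ?thesis
    using min_weight_loss_bounds[OF assms(1-3,5)] unfolding capped_loss_eq[OF assms(4)] by auto
qed

lemma capped_loss_second_difference:
  assumes "T > 0" "g > 0" "s > 0" "Gam > 0" "e\<^sub>1 + e\<^sub>2 \<ge> 0"
  shows "capped_loss T g Gam s (D + e\<^sub>1) + capped_loss T g Gam s (D + e\<^sub>2)
       \<le> 2 * capped_loss T g Gam s D + (e\<^sub>1 + e\<^sub>2)"
  using min_weight_loss_second_difference[OF assms(1-3,5), of D] assms(5)
  unfolding capped_loss_eq[OF assms(4)] by (auto simp: min_def)

section \<open>Prior variance equal to the population variance\<close>

definition matched_loss :: "real \<Rightarrow> real \<Rightarrow> real \<Rightarrow> real \<Rightarrow> real" where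
  "matched_loss T g D u = u\<^sup>2 * D + T * u * (1 - u) - g / 2 * ln u"

lemma weight_loss_matched:
  assumes "T > 0" "0 \<le> a" "a < 1"
  shows "weight_loss T g T D a = matched_loss T g D (1 - a)"
proof -
  have "1 + T * a / (T * (1 - a)) = 1 / (1 - a)"
    using assms by (simp add: field_simps)
  then have "ln (1 + T * a / (T * (1 - a))) = - ln (1 - a)"
    using assms by (simp add: ln_div)
  then show ?thesis
    unfolding weight_loss_def noise_cost_def matched_loss_def by (simp add: algebra_simps)
qed

text \<open>
  \<open>u\<^sup>\<star> = 1 - a\<^sup>\<star>\<close> is the root in \<open>(0, 1)\<close> of \<open>u \<cdot> matched_loss' u = 2 (D - T) u\<^sup>2 + T u - \<gamma>/2\<close>
  when there is one, i.e. when \<open>2D > T + \<gamma>/2\<close>; otherwise the minimum is at the boundary \<open>u = 1\<close>.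
\<close>

definition opt_weight :: "real \<Rightarrow> real \<Rightarrow> real \<Rightarrow> real" where
  "opt_weight T g D =
     (if 2 * D \<le> T + g / 2 then 0 else 1 - (sqrt (T\<^sup>2 + 4 * (D - T) * g) - T) / (4 * (D - T)))"

lemma matched_loss_growth_at_one:
  assumes "T > 0" "g \<ge> 2 * T" "2 * D \<le> T + g / 2" "0 < u" "u \<le> 1"
  shows "matched_loss T g D 1 + g / 4 * (1 - u)\<^sup>2 \<le> matched_loss T g D u"
proof -
  define w where "w = 1 - u"
  have w: "0 \<le> w" "w < 1" and u: "u = 1 - w"
    using assms unfolding w_def by auto
  have "0 \<le> w * ((1 - w) * (T + g / 2 - 2 * D) + w * (g / 2 - D))"
    using w assms by (intro mult_nonneg_nonneg add_nonneg_nonneg) auto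
  moreover have "0 \<le> g / 2 * (- ln u - w - w\<^sup>2 / 2)"
    using minus_ln_one_minus_ge[OF w] assms u by simp
  moreover have "matched_loss T g D u - matched_loss T g D 1 - g / 4 * (1 - u)\<^sup>2
      = w * ((1 - w) * (T + g / 2 - 2 * D) + w * (g / 2 - D)) + g / 2 * (- ln u - w - w\<^sup>2 / 2)"
    unfolding matched_loss_def u by (simp add: field_simps power2_eq_square)
  ultimately show ?thesis
    by linarith
qed

lemma opt_weight_interior:
  assumes "T > 0" "g \<ge> 2 * T" "\<not> 2 * D \<le> T + g / 2"
  defines "u \<equiv> (sqrt (T\<^sup>2 + 4 * (D - T) * g) - T) / (4 * (D - T))"
  shows "0 < u" "u < 1" "2 * (D - T) * u\<^sup>2 + T * u - g / 2 = 0" "opt_weight T g D = 1 - u"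
proof -
  define Q where "Q = D - T"
  define S where "S = sqrt (T\<^sup>2 + 4 * Q * g)"
  have Q: "Q > 0" and g: "g > 0"
    unfolding Q_def using assms by simp_all
  have S2: "S\<^sup>2 = T\<^sup>2 + 4 * Q * g"
    unfolding S_def using Q g assms(1) by (simp add: add_nonneg_nonneg)
  have "T < S"
    unfolding S_def using Q g assms(1) by (intro real_less_rsqrt) simp
  moreover have "S < 4 * Q + T"
    unfolding S_def
  proof (rule real_less_lsqrt)
    have "4 * Q * g < 4 * Q * (4 * Q + 2 * T)"
      using Q assms(3) unfolding Q_def by (intro mult_strict_left_mono) auto
    then show "T\<^sup>2 + 4 * Q * g < (4 * Q + T)\<^sup>2"
      by (simp add: power2_eq_square algebra_simps)
  qed (use Q assms(1) in simp)
  moreover have u: "u = (S - T) / (4 * Q)"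
    unfolding u_def S_def Q_def ..
  ultimately show "0 < u" "u < 1"
    using Q by (simp_all add: divide_less_eq)
  show "2 * (D - T) * u\<^sup>2 + T * u - g / 2 = 0"
    unfolding u Q_def[symmetric] using Q S2 by (simp add: field_simps power2_eq_square)
  show "opt_weight T g D = 1 - u"
    unfolding opt_weight_def u_def using assms(3) by simp
qed

lemma opt_weight_range:
  assumes "T > 0" "g \<ge> 2 * T"
  shows "0 \<le> opt_weight T g D \<and> opt_weight T g D < 1"
proof (cases "2 * D \<le> T + g / 2")
  case False
  then show ?thesis
    using opt_weight_interior[OF assms False] by simp
qed (simp add: opt_weight_def)

lemma opt_weight_pos:
  assumes "T > 0" "g \<ge> 2 * T" "T + g / 2 < 2 * D"
  shows "0 < opt_weight T g D"
  using opt_weight_interior[of T g D] assms by simp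

text \<open>\<open>matched_loss u - (\<gamma>/4) (u - u\<^sup>\<star>)\<^sup>2\<close> has derivative \<open>(u - u\<^sup>\<star>)(2 (D - T) + \<gamma>/(2 u u\<^sup>\<star>) - \<gamma>/2)\<close>, whose second factor is positive on \<open>(0, 1]\<close>.\<close>

lemma matched_loss_growth_at_root:
  assumes "T > 0" "g \<ge> 2 * T" "\<not> 2 * D \<le> T + g / 2" and u: "0 < u" "u \<le> 1"
  defines "u\<^sub>0 \<equiv> 1 - opt_weight T g D"
  shows "matched_loss T g D u\<^sub>0 + g / 4 * (u - u\<^sub>0)\<^sup>2 \<le> matched_loss T g D u"
proof -
  have u\<^sub>0: "0 < u\<^sub>0" "u\<^sub>0 < 1" "2 * (D - T) * u\<^sub>0\<^sup>2 + T * u\<^sub>0 - g / 2 = 0"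
    using opt_weight_interior[OF assms(1-3)] unfolding u\<^sub>0_def by simp_all
  have "D - T > 0" "g > 0"
    using assms by simp_all
  define G where "G y = matched_loss T g D y - g / 4 * (y - u\<^sub>0)\<^sup>2" for y
  define G' where "G' y = 2 * D * y + T * (1 - 2 * y) - g / 2 * (1 / y) - g / 2 * (y - u\<^sub>0)" for y
  have deriv: "(G has_real_derivative G' y) (at y)" if "0 < y" for y
    unfolding G_def G'_def matched_loss_def using that
    by (auto intro!: derivative_eq_intros simp: field_simps power2_eq_square)
  have G'_factor: "G' y = (y - u\<^sub>0) * (2 * (D - T) + g / (2 * y * u\<^sub>0) - g / 2)" if "0 < y" for y
  proof -
    have "G' y - (y - u\<^sub>0) * (2 * (D - T) + g / (2 * y * u\<^sub>0) - g / 2)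
        = (2 * (D - T) * u\<^sub>0\<^sup>2 + T * u\<^sub>0 - g / 2) / u\<^sub>0"
      unfolding G'_def using that u\<^sub>0(1) by (simp add: field_simps power2_eq_square)
    also have "\<dots> = 0"
      unfolding u\<^sub>0(3) by simp
    finally show ?thesis
      by simp
  qed
  have factor_pos: "0 < 2 * (D - T) + g / (2 * y * u\<^sub>0) - g / 2" if "0 < y" "y \<le> 1" for y
  proof -
    have "y * u\<^sub>0 \<le> 1"
      using that u\<^sub>0 by (simp add: mult_le_one)
    then have "g / 2 \<le> (g / 2) / (y * u\<^sub>0)"
      using that u\<^sub>0 \<open>g > 0\<close> by (simp add: le_divide_eq)
    then show ?thesis
      using \<open>D - T > 0\<close> by (simp add: field_simps)
  qed
  have "G u\<^sub>0 \<le> G u"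
  proof (rule le_of_derivative_sign_change[where G = G and G' = G'])
    fix y
    assume "min u\<^sub>0 u \<le> y" "y \<le> max u\<^sub>0 u"
    then show "(G has_real_derivative G' y) (at y)"
      using u u\<^sub>0 by (intro deriv) simp
  next
    fix y
    assume "min u\<^sub>0 u < y" "y < max u\<^sub>0 u"
    then have "0 < y" "y \<le> 1"
      using u u\<^sub>0 by auto
    then show "0 \<le> (y - u\<^sub>0) * G' y"
      unfolding G'_factor[OF \<open>0 < y\<close>] mult.assoc[symmetric] power2_eq_square[symmetric]
      using factor_pos[of y] by simp
  qed
  then show ?thesis
    unfolding G_def by simp
qed

lemma weight_loss_matched_growth:
  assumes "T > 0" "g \<ge> 2 * T" "0 \<le> a" "a < 1"
  shows "weight_loss T g T D (opt_weight T g D) + g / 4 * (a - opt_weight T g D)\<^sup>2 \<le> weight_loss T g T D a"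
proof -
  have u: "0 < 1 - a" "1 - a \<le> 1"
    using assms by auto
  have range: "0 \<le> opt_weight T g D" "opt_weight T g D < 1"
    using opt_weight_range[OF assms(1,2)] by auto
  have "(a - opt_weight T g D)\<^sup>2 = (1 - a - (1 - opt_weight T g D))\<^sup>2"
    by (simp add: power2_eq_square algebra_simps)
  then show ?thesis
    using matched_loss_growth_at_one[OF assms(1,2) _ u] matched_loss_growth_at_root[OF assms(1,2) _ u]
      weight_loss_matched[OF assms(1,3,4)] weight_loss_matched[OF assms(1) range]
    by (cases "2 * D \<le> T + g / 2") (simp_all add: opt_weight_def)
qed

lemma min_weight_loss_matched:
  assumes "T > 0" "g \<ge> 2 * T"
  shows "min_weight_loss T g T D = weight_loss T g T D (opt_weight T g D)"
proof (rule antisym)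
  have "g > 0"
    using assms by simp
  then show "min_weight_loss T g T D \<le> weight_loss T g T D (opt_weight T g D)"
    using min_weight_loss_le[OF assms(1) _ assms(1)] opt_weight_range[OF assms] by simp
  show "weight_loss T g T D (opt_weight T g D) \<le> min_weight_loss T g T D"
  proof (rule min_weight_loss_greatest)
    fix a :: real
    assume "0 \<le> a" "a < 1"
    moreover have "0 \<le> g / 4 * (a - opt_weight T g D)\<^sup>2"
      using \<open>g > 0\<close> by simp
    ultimately show "weight_loss T g T D (opt_weight T g D) \<le> weight_loss T g T D a"
      using weight_loss_matched_growth[OF assms, of a D] by linarith
  qed
qed

text \<open>\<open>noise_cost_slope T g a\<close> is the partial derivative of \<open>noise_cost T g s a\<close> in \<open>s\<close> at \<open>s = T\<close>.\<close>

definition noise_cost_slope :: "real \<Rightarrow> real \<Rightarrow> real \<Rightarrow> real" where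
  "noise_cost_slope T g a = a * (1 - a - g / (2 * T))"

lemma noise_cost_slope_nonpos:
  assumes "T > 0" "g \<ge> 2 * T" "0 \<le> a"
  shows "noise_cost_slope T g a \<le> 0"
proof -
  have "1 \<le> g / (2 * T)"
    using assms by (simp add: le_divide_eq)
  then show ?thesis
    unfolding noise_cost_slope_def using assms(3) by (intro mult_nonneg_nonpos) simp_all
qed

lemma noise_cost_slope_neg:
  assumes "T > 0" "g \<ge> 2 * T" "0 < a"
  shows "noise_cost_slope T g a < 0"
proof -
  have "1 \<le> g / (2 * T)"
    using assms by (simp add: le_divide_eq)
  then show ?thesis
    unfolding noise_cost_slope_def using assms(3) by (intro mult_pos_neg) simp_all
qed

lemma abs_noise_cost_slope_le:
  assumes "T > 0" "g > 0" "0 \<le> a" "a < 1"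
  shows "\<bar>noise_cost_slope T g a\<bar> \<le> 1 + g / (2 * T)"
proof -
  have "\<bar>noise_cost_slope T g a\<bar> = a * \<bar>1 - a - g / (2 * T)\<bar>"
    unfolding noise_cost_slope_def using assms by (simp add: abs_mult)
  also have "\<dots> \<le> 1 * (1 + g / (2 * T))"
  proof (intro mult_mono)
    have "0 \<le> g / (2 * T)"
      using assms by simp
    then show "\<bar>1 - a - g / (2 * T)\<bar> \<le> 1 + g / (2 * T)"
      using assms unfolding abs_le_iff by linarith
  qed (use assms in simp_all)
  finally show ?thesis
    by simp
qed

lemma noise_cost_linearization:
  assumes "T > 0" "g > 0" "T / 2 \<le> s" "s \<le> 2 * T" "0 \<le> a" "a < 1"
  shows "\<bar>noise_cost T g s a - noise_cost T g T a - (s - T) * noise_cost_slope T g a\<bar> \<le> g * (s - T)\<^sup>2 / T\<^sup>2"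
proof -
  define x where "x = s * (1 - a) + T * a"
  define r\<^sub>1 where "r\<^sub>1 = ln x - ln T - (x - T) / T"
  define r\<^sub>2 where "r\<^sub>2 = ln s - ln T - (s - T) / T"
  have "s > 0"
    using assms by simp
  have "T / 2 * (1 - a) \<le> s * (1 - a)" "T / 2 * a \<le> T * a"
    using assms by (simp_all add: mult_right_mono)
  moreover have "T / 2 = T / 2 * (1 - a) + T / 2 * a"
    by (simp add: field_simps)
  ultimately have "T / 2 \<le> x"
    unfolding x_def by linarith
  have "x - T = (s - T) * (1 - a)"
    unfolding x_def by (simp add: algebra_simps)
  then have "(x - T)\<^sup>2 \<le> (s - T)\<^sup>2"
    using assms by (simp add: power_mult_distrib power_le_one mult_left_le)
  then have "2 * (x - T)\<^sup>2 / T\<^sup>2 \<le> 2 * (s - T)\<^sup>2 / T\<^sup>2"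
    by (simp add: divide_right_mono)
  then have "\<bar>r\<^sub>1 - r\<^sub>2\<bar> \<le> 2 * (s - T)\<^sup>2 / T\<^sup>2"
    using ln_tangent_remainder_bounds[OF assms(1) \<open>T / 2 \<le> x\<close>] ln_tangent_remainder_bounds[OF assms(1,3)]
    unfolding r\<^sub>1_def r\<^sub>2_def abs_le_iff by linarith
  have ln_cost: "ln (1 + T * a / (q * (1 - a))) = ln (q * (1 - a) + T * a) - ln q - ln (1 - a)" if "q > 0" for q
  proof -
    have "1 + T * a / (q * (1 - a)) = (q * (1 - a) + T * a) / (q * (1 - a))"
      using that assms by (simp add: field_simps)
    moreover have "q * (1 - a) + T * a > 0"
      using that assms by (simp add: add_pos_nonneg)
    ultimately show ?thesis
      using that assms by (simp add: ln_div ln_mult)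
  qed
  have remainder: "noise_cost T g s a - noise_cost T g T a - (s - T) * noise_cost_slope T g a
      = g / 2 * (r\<^sub>1 - r\<^sub>2)"
    unfolding noise_cost_def noise_cost_slope_def ln_cost[OF \<open>s > 0\<close>] ln_cost[OF assms(1)]
      r\<^sub>1_def r\<^sub>2_def x_def
    using assms(1) by (simp add: field_simps)
  have "\<bar>noise_cost T g s a - noise_cost T g T a - (s - T) * noise_cost_slope T g a\<bar> = g / 2 * \<bar>r\<^sub>1 - r\<^sub>2\<bar>"
    unfolding remainder using assms(2) by (simp add: abs_mult)
  also have "\<dots> \<le> g / 2 * (2 * (s - T)\<^sup>2 / T\<^sup>2)"
    using \<open>\<bar>r\<^sub>1 - r\<^sub>2\<bar> \<le> _\<close> assms(2) by (intro mult_left_mono) simp_all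
  finally show ?thesis
    by simp
qed

text \<open>
  Envelope theorem with quadratic error: the upper bound evaluates \<open>weight_loss T g s D\<close> at
  \<open>a\<^sup>\<star>\<close>, the lower bound uses the quadratic growth of \<open>weight_loss T g T D\<close> around \<open>a\<^sup>\<star>\<close> to absorb
  the first-order change of the slope.
\<close>

lemma min_weight_loss_linearization:
  assumes "T > 0" "g \<ge> 2 * T" "T / 2 \<le> s" "s \<le> 2 * T"
  shows "\<bar>min_weight_loss T g s D - min_weight_loss T g T D - (s - T) * noise_cost_slope T g (opt_weight T g D)\<bar>
     \<le> (g / T\<^sup>2 + (1 + g / (2 * T))\<^sup>2 / g) * (s - T)\<^sup>2"
proof -
  define a\<^sub>0 where "a\<^sub>0 = opt_weight T g D"
  define e where "e = s - T"
  define L where "L = 1 + g / (2 * T)"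
  have "g > 0" "s > 0"
    using assms by simp_all
  have a\<^sub>0: "0 \<le> a\<^sub>0" "a\<^sub>0 < 1"
    using opt_weight_range[OF assms(1,2)] unfolding a\<^sub>0_def by auto
  have min_at_T: "min_weight_loss T g T D = weight_loss T g T D a\<^sub>0"
    unfolding a\<^sub>0_def by (rule min_weight_loss_matched[OF assms(1,2)])
  have linear: "\<bar>weight_loss T g s D a - weight_loss T g T D a - e * noise_cost_slope T g a\<bar> \<le> g * e\<^sup>2 / T\<^sup>2"
    if "0 \<le> a" "a < 1" for a
    using noise_cost_linearization[OF assms(1) \<open>g > 0\<close> assms(3,4) that] unfolding weight_loss_def e_def by simp
  have "0 \<le> L\<^sup>2 / g * e\<^sup>2"
    using \<open>g > 0\<close> by simp
  moreover have "min_weight_loss T g s D \<le> weight_loss T g s D a\<^sub>0"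
    by (rule min_weight_loss_le[OF assms(1) \<open>g > 0\<close> \<open>s > 0\<close> a\<^sub>0])
  moreover have "min_weight_loss T g T D + e * noise_cost_slope T g a\<^sub>0 - (g * e\<^sup>2 / T\<^sup>2 + L\<^sup>2 / g * e\<^sup>2)
      \<le> min_weight_loss T g s D"
  proof (rule min_weight_loss_greatest)
    fix a :: real
    assume a: "0 \<le> a" "a < 1"
    have "0 \<le> g / (2 * T)"
      using \<open>g > 0\<close> assms(1) by simp
    then have "\<bar>1 - a - a\<^sub>0 - g / (2 * T)\<bar> \<le> L"
      unfolding L_def abs_le_iff using a a\<^sub>0 by linarith
    then have "- (L\<^sup>2 / g) * e\<^sup>2 \<le> g / 4 * (a - a\<^sub>0)\<^sup>2 + e * ((a - a\<^sub>0) * (1 - a - a\<^sub>0 - g / (2 * T)))"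
      by (rule quadratic_cross_term_lower_bound[OF \<open>g > 0\<close>])
    moreover have "noise_cost_slope T g a = noise_cost_slope T g a\<^sub>0 + (a - a\<^sub>0) * (1 - a - a\<^sub>0 - g / (2 * T))"
      unfolding noise_cost_slope_def by (simp add: algebra_simps power2_eq_square diff_divide_distrib)
    then have "e * noise_cost_slope T g a = e * noise_cost_slope T g a\<^sub>0 + e * ((a - a\<^sub>0) * (1 - a - a\<^sub>0 - g / (2 * T)))"
      by (simp only: distrib_left)
    moreover have "weight_loss T g T D a\<^sub>0 + g / 4 * (a - a\<^sub>0)\<^sup>2 \<le> weight_loss T g T D a"
      unfolding a\<^sub>0_def by (rule weight_loss_matched_growth[OF assms(1,2) a])
    ultimately show "min_weight_loss T g T D + e * noise_cost_slope T g a\<^sub>0 - (g * e\<^sup>2 / T\<^sup>2 + L\<^sup>2 / g * e\<^sup>2)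
        \<le> weight_loss T g s D a"
      using linear[OF a] unfolding min_at_T abs_le_iff by linarith
  qed
  ultimately show ?thesis
    using linear[OF a\<^sub>0] unfolding min_at_T abs_le_iff e_def[symmetric] L_def[symmetric] a\<^sub>0_def[symmetric]
    by (simp add: distrib_right)
qed

section \<open>Population loss\<close>

lemma integrable_normal_density_min_weight_loss:
  assumes "sig > 0" "T > 0" "g > 0" "s > 0"
  shows "integrable lborel (\<lambda>x. normal_density mu sig x * min_weight_loss T g s ((c - x)\<^sup>2))"
  by (rule integrable_normal_density_comp_sq[OF assms(1) mono_min_weight_loss[OF assms(2-4)]
        min_weight_loss_bounds[OF assms(2-4)]])

lemma integrable_normal_density_slope:
  assumes "sig > 0" "T > 0" "g \<ge> 2 * T"
  shows "integrable lborel (\<lambda>x. normal_density mu sig x * noise_cost_slope T g (opt_weight T g ((mu - x)\<^sup>2)))"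
proof (rule Bochner_Integration.integrable_bound)
  show "integrable lborel (\<lambda>x. normal_density mu sig x * (1 + g / (2 * T)))"
    using assms by simp
  show "(\<lambda>x. normal_density mu sig x * noise_cost_slope T g (opt_weight T g ((mu - x)\<^sup>2))) \<in> borel_measurable lborel"
    unfolding noise_cost_slope_def opt_weight_def by measurable
  have "\<bar>noise_cost_slope T g (opt_weight T g ((mu - x)\<^sup>2))\<bar> \<le> 1 + g / (2 * T)" for x
    using abs_noise_cost_slope_le opt_weight_range assms by simp
  then show "AE x in lborel. norm (normal_density mu sig x * noise_cost_slope T g (opt_weight T g ((mu - x)\<^sup>2)))
      \<le> norm (normal_density mu sig x * (1 + g / (2 * T)))"
    using assms by (intro AE_I2) (simp add: abs_mult mult_left_mono)
qed

lemma integral_normal_density_slope_neg: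
  assumes "sig > 0" "T > 0" "g \<ge> 2 * T"
  shows "(LINT x|lborel. normal_density mu sig x * noise_cost_slope T g (opt_weight T g ((mu - x)\<^sup>2))) < 0"
proof -
  define f where "f x = - (normal_density mu sig x * noise_cost_slope T g (opt_weight T g ((mu - x)\<^sup>2)))" for x
  have nonneg: "0 \<le> f x" for x
    unfolding f_def using noise_cost_slope_nonpos[OF assms(2,3)] opt_weight_range[OF assms(2,3)] assms(1)
    by (simp add: mult_nonneg_nonpos)
  txt \<open>On this interval \<open>a\<^sup>\<star> > 0\<close>, so the integrand is strictly negative on a set of positive measure.\<close>
  define c where "c = mu + sqrt (T + g)"
  have pos: "0 < f x" if "x \<in> {c<..<c + 1}" for x
  proof -
    have "sqrt (T + g) < x - mu"
      using that unfolding c_def by simp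
    then have "T + g < (mu - x)\<^sup>2"
      using assms by (metis linorder_not_le power2_commute real_le_rsqrt)
    then have "0 < opt_weight T g ((mu - x)\<^sup>2)"
      using assms by (intro opt_weight_pos) simp_all
    then show ?thesis
      unfolding f_def using noise_cost_slope_neg[OF assms(2,3)] normal_density_pos[OF assms(1)]
      by (simp add: mult_pos_neg)
  qed
  have "integrable lborel f"
    unfolding f_def using integrable_normal_density_slope[OF assms] by simp
  have "integral\<^sup>L lborel f \<noteq> 0"
  proof
    assume "integral\<^sup>L lborel f = 0"
    with \<open>integrable lborel f\<close> nonneg have "AE x in lborel. f x = 0"
      by (subst (asm) integral_nonneg_eq_0_iff_AE) auto
    then have "AE x in lborel. x \<notin> {c<..<c + 1}"
      by eventually_elim (use pos in force)
    then show False
      by (subst (asm) AE_iff_measurable[of "{c<..<c + 1}"]) auto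
  qed
  moreover have "0 \<le> integral\<^sup>L lborel f"
    using nonneg by (intro integral_nonneg_AE) simp
  ultimately have "0 < integral\<^sup>L lborel f"
    by simp
  then show ?thesis
    unfolding f_def by simp
qed

lemma integral_min_weight_loss_has_derivative:
  assumes "sig > 0" "T > 0" "g \<ge> 2 * T"
  shows "((\<lambda>s. LINT x|lborel. normal_density mu sig x * min_weight_loss T g s ((mu - x)\<^sup>2)) has_real_derivative
           (LINT x|lborel. normal_density mu sig x * noise_cost_slope T g (opt_weight T g ((mu - x)\<^sup>2)))) (at T)"
proof -
  define P where "P s = (LINT x|lborel. normal_density mu sig x * min_weight_loss T g s ((mu - x)\<^sup>2))" for s
  define f where "f x = normal_density mu sig x * noise_cost_slope T g (opt_weight T g ((mu - x)\<^sup>2))" for x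
  define K where "K = g / T\<^sup>2 + (1 + g / (2 * T))\<^sup>2 / g"
  have "g > 0"
    using assms by simp
  have int_P: "integrable lborel (\<lambda>x. normal_density mu sig x * min_weight_loss T g s ((mu - x)\<^sup>2))" if "s > 0" for s
    using assms(1,2) \<open>g > 0\<close> that by (rule integrable_normal_density_min_weight_loss)
  have int_f: "integrable lborel f"
    unfolding f_def by (rule integrable_normal_density_slope[OF assms])
  have "\<bar>P (T + h) - P T - integral\<^sup>L lborel f * h\<bar> \<le> K * h\<^sup>2" if "\<bar>h\<bar> < T / 2" for h
  proof -
    have s: "T / 2 \<le> T + h" "T + h \<le> 2 * T" "T + h > 0"
      using that assms by auto
    define R where "R x = min_weight_loss T g (T + h) ((mu - x)\<^sup>2) - min_weight_loss T g T ((mu - x)\<^sup>2)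
      - h * noise_cost_slope T g (opt_weight T g ((mu - x)\<^sup>2))" for x
    have "integrable lborel (\<lambda>x. normal_density mu sig x * min_weight_loss T g (T + h) ((mu - x)\<^sup>2)
        - normal_density mu sig x * min_weight_loss T g T ((mu - x)\<^sup>2) - h * f x)"
      using int_P[OF s(3)] int_P[OF assms(2)] int_f by simp
    moreover have R: "normal_density mu sig x * min_weight_loss T g (T + h) ((mu - x)\<^sup>2)
        - normal_density mu sig x * min_weight_loss T g T ((mu - x)\<^sup>2) - h * f x = normal_density mu sig x * R x" for x
      unfolding R_def f_def by (simp add: algebra_simps)
    ultimately have int_R: "integrable lborel (\<lambda>x. normal_density mu sig x * R x)"
      by simp
    have "P (T + h) - P T - integral\<^sup>L lborel f * h
        = (LINT x|lborel. normal_density mu sig x * min_weight_loss T g (T + h) ((mu - x)\<^sup>2)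
            - normal_density mu sig x * min_weight_loss T g T ((mu - x)\<^sup>2) - h * f x)"
      unfolding P_def using int_P[OF s(3)] int_P[OF assms(2)] int_f by (simp add: mult.commute)
    also have "\<dots> = (LINT x|lborel. normal_density mu sig x * R x)"
      unfolding R ..
    also have "\<bar>\<dots>\<bar> \<le> (LINT x|lborel. normal_density mu sig x * (K * h\<^sup>2))"
    proof (rule integral_abs_bound_integral[OF int_R])
      fix x
      have "\<bar>R x\<bar> \<le> K * h\<^sup>2"
        using min_weight_loss_linearization[OF assms(2,3) s(1,2)] unfolding R_def K_def by simp
      then show "\<bar>normal_density mu sig x * R x\<bar> \<le> normal_density mu sig x * (K * h\<^sup>2)"
        by (simp add: abs_mult mult_left_mono)
    qed (use assms(1) in simp)
    also have "\<dots> = K * h\<^sup>2"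
      using assms(1) by simp
    finally show ?thesis .
  qed
  then have "(P has_real_derivative integral\<^sup>L lborel f) (at T)"
    using assms(2) by (intro has_real_derivative_of_quadratic_error[where r = "T / 2"]) simp_all
  then show ?thesis
    unfolding P_def f_def .
qed

lemma pop_loss_uncapped_has_derivative_sigma:
  assumes "sigT > 0" "gam \<ge> 2 * sigT\<^sup>2"
  shows "((\<lambda>x. pop_loss muT sigT gam \<infinity> muT x) has_real_derivative
      2 * sigT * (LINT th|lborel. normal_density muT sigT th
                    * noise_cost_slope (sigT\<^sup>2) gam (opt_weight (sigT\<^sup>2) gam ((muT - th)\<^sup>2)))) (at sigT)"
proof -
  define P where
    "P s = (LINT th|lborel. normal_density muT sigT th * min_weight_loss (sigT\<^sup>2) gam s ((muT - th)\<^sup>2))" for s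
  have "0 < sigT\<^sup>2"
    using assms(1) by simp
  then have "gam > 0"
    using assms(2) by linarith
  have "eventually (\<lambda>x. x \<in> {0<..}) (nhds sigT)"
    using assms(1) by (intro eventually_nhds_in_open) auto
  then have "eventually (\<lambda>x. pop_loss muT sigT gam \<infinity> muT x = P (x\<^sup>2)) (nhds sigT)"
    by eventually_elim (simp add: pop_loss_eq_capped_loss assms(1) \<open>gam > 0\<close> P_def)
  moreover have "((\<lambda>x. x\<^sup>2) has_real_derivative 2 * sigT) (at sigT)"
    by (auto intro!: derivative_eq_intros)
  moreover have "(P has_real_derivative (LINT th|lborel. normal_density muT sigT th
      * noise_cost_slope (sigT\<^sup>2) gam (opt_weight (sigT\<^sup>2) gam ((muT - th)\<^sup>2)))) (at (sigT\<^sup>2))"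
    unfolding P_def using assms by (intro integral_min_weight_loss_has_derivative) simp_all
  ultimately show ?thesis
    by (subst DERIV_cong_ev[OF refl _ refl]) (auto dest: DERIV_chain' simp: mult.commute)
qed

theorem proposition8:
  fixes muT sigT gam :: real and Gam :: ereal
  assumes "sigT > 0" and "gam > 0" and "Gam > 0"
  shows "(\<forall>sigA>0. \<forall>muA. pop_loss muT sigT gam Gam muT sigA \<le> pop_loss muT sigT gam Gam muA sigA)
       \<and> ((\<lambda>m. pop_loss muT sigT gam Gam m sigT) has_real_derivative 0) (at muT)
       \<and> (Gam = \<infinity> \<and> gam \<ge> 2 * sigT\<^sup>2 \<longrightarrow>
            (\<exists>d<0. ((\<lambda>s. pop_loss muT sigT gam Gam muT s) has_real_derivative d) (at sigT)))"
proof -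
  have T: "sigT\<^sup>2 > 0" and "sigT \<noteq> 0"
    using assms(1) by simp_all
  note capped_loss = mono_capped_loss capped_loss_bounds capped_loss_second_difference
  have "pop_loss muT sigT gam Gam muT sigA \<le> pop_loss muT sigT gam Gam muA sigA" if "sigA > 0" for sigA muA
  proof -
    have "sigA \<noteq> 0" "sigA\<^sup>2 > 0"
      using that by simp_all
    then show ?thesis
      unfolding pop_loss_eq_capped_loss[OF \<open>sigA \<noteq> 0\<close> assms(1,2)]
      by (intro normal_mean_minimizes_integral assms(1) capped_loss T assms(2,3))
  qed
  moreover have "((\<lambda>m. pop_loss muT sigT gam Gam m sigT) has_real_derivative 0) (at muT)"
    unfolding pop_loss_eq_capped_loss[OF \<open>sigT \<noteq> 0\<close> assms(1,2)]
    by (intro normal_mean_has_derivative_zero assms(1) capped_loss T assms(2,3))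
  moreover have "\<exists>d<0. ((\<lambda>s. pop_loss muT sigT gam Gam muT s) has_real_derivative d) (at sigT)"
    if "Gam = \<infinity>" "gam \<ge> 2 * sigT\<^sup>2"
  proof -
    have "0 < 2 * sigT"
      using assms(1) by simp
    then have "2 * sigT * (LINT th|lborel. normal_density muT sigT th
        * noise_cost_slope (sigT\<^sup>2) gam (opt_weight (sigT\<^sup>2) gam ((muT - th)\<^sup>2))) < 0"
      by (rule mult_pos_neg[OF _ integral_normal_density_slope_neg[OF assms(1) T that(2)]])
    then show ?thesis
      using pop_loss_uncapped_has_derivative_sigma[OF assms(1) that(2)] that(1) by blast
  qed
  ultimately show ?thesis
    by blast
qed

end
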